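(* Let $n\ge 2$. Let $\hat a_{i,i-1}>0$ and $\hat b_{i,i-1}\in\mathbb{R}$ for $2\le i\le n$; for $1\le m\le k\le n$ put $\hat a_{k,m}:=\prod_{i=m+1}^{k}\hat a_{i,i-1}$ (so $\hat a_{k,k}=1$) and $\hat b_{n,1}:=\sum_{k=2}^{n}\hat a_{n,k}\hat b_{k,k-1}$. Define $i^*$: if $\min_{2\le k\le n}\hat a_{k,1}\le1$, let $i^*\in\{2,\ldots,n\}$ be an index attaining this minimum; otherwise $i^*=1$. Let $\tau^1(t)=a_1t+b_1$ and $\tau^n(t)=a_nt+b_n$ with $a_1,a_n>0$, and set $a_{n,1}:=a_n/a_1$, $b_{n,1}:=b_n-a_{n,1}b_1$ (so $\tau^n(t)=a_{n,1}\tau^1(t)+b_{n,1}$ for all $t$). Let $t_1\le t_n$ be reals, and let $R_1:=\tau^1(t_1)$, $L_n:=\tau^n(t_n)$, and let $L_i$ ($2\le i\le n-1$) and $R_i$ ($2\le i\le n-1$) be reals such that $L_i=\hat a_{i,i-1}R_{i-1}+\hat b_{i,i-1}$ for all $2\le i\le n$ and $L_i\le R_i$ for $2\le i\le n-1$. Then $$\sum_{j=2}^{n-1}\bigl(R_j-L_j\bigr)\ge\frac{a_{n,1}-\hat a_{n,1}}{\hat a_{n,i^*}}\,R_1+\frac{b_{n,1}-\hat b_{n,1}}{\hat a_{n,i^*}}.$$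
   Context: Setting: a chain of nodes $1,\ldots,n$ whose endpoints $1$ and $n$ are good nodes with affine local clocks $\tau^1,\tau^n$ of the reference time $t$; node $1$ sends a timing packet at reference time $t_1$ (send time-stamp $R_1$) and node $n$ receives it at reference time $t_n\ge t_1$ (receive time-stamp $L_n$). Intermediate nodes $i$ append a receive time-stamp $L_i=\tau^{i,l}(t_{i,l})$ and a send time-stamp $R_i=\tau^{i,r}(t_{i,r})$ from arbitrary clocks; $R_j-L_j$ is node $j$'s forwarding delay. $\hat a_{i,i-1},\hat b_{i,i-1}$ are declared relative skews/offsets, $a_{n,1},b_{n,1}$ the true relative skew/offset of node $n$ with respect to node $1$. *)

theory Defs
  imports Complex_Main
begin

text \<open>ah i stands for the declared relative skew hat a_{i,i-1}, bh i for hat b_{i,i-1}.\<close>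

definition ahat :: "(nat \<Rightarrow> real) \<Rightarrow> nat \<Rightarrow> nat \<Rightarrow> real" where
  "ahat ah k m = (\<Prod>i\<in>{m+1..k}. ah i)"

definition bhat :: "(nat \<Rightarrow> real) \<Rightarrow> (nat \<Rightarrow> real) \<Rightarrow> nat \<Rightarrow> real" where
  "bhat ah bh n = (\<Sum>k=2..n. ahat ah n k * bh k)"

definition is_istar :: "(nat \<Rightarrow> real) \<Rightarrow> nat \<Rightarrow> nat \<Rightarrow> bool" where
  "is_istar ah n i \<longleftrightarrow>
     (if Min ((\<lambda>k. ahat ah k 1) ` {2..n}) \<le> 1
      then i \<in> {2..n} \<and> ahat ah i 1 = Min ((\<lambda>k. ahat ah k 1) ` {2..n})
      else i = 1)"

end

theory Submission
  imports Defs
begin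

text \<open>Unrolling the relation \<open>L i = ah i * R (i - 1) + bh i\<close> along the chain writes
  \<open>L n\<close> as the declared affine image \<open>ahat n 1 * R 1 + bhat n\<close> of \<open>R 1\<close> plus the forwarding
  delays \<open>R j - L j\<close>, each weighted by \<open>ahat n j\<close>. Since the endpoint clocks are good and
  \<open>t1 \<le> tn\<close>, \<open>L n\<close> is at least the true affine image of \<open>R 1\<close>, so the weighted delays are
  bounded below by the discrepancy between true and declared parameters. Every weight
  \<open>ahat n j = ahat n 1 / ahat j 1\<close> is at most \<open>ahat n istar\<close>, because \<open>istar\<close> minimises
  \<open>ahat k 1\<close> (or all those products exceed 1 and \<open>istar = 1\<close>); dividing by this largest
  weight yields the bound on the unweighted sum of delays.\<close>

lemma ahat_self [simp]: "ahat ah k k = 1"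
  by (simp add: ahat_def)

lemma ahat_Suc: "m \<le> k \<Longrightarrow> ahat ah (Suc k) m = ah (Suc k) * ahat ah k m"
  unfolding ahat_def by (simp add: atLeastAtMostSuc_conv mult.commute)

lemma ahat_pos: "(\<And>i. m < i \<Longrightarrow> i \<le> k \<Longrightarrow> ah i > 0) \<Longrightarrow> ahat ah k m > 0"
  unfolding ahat_def by (rule prod_pos) auto

lemma ahat_trans:
  assumes "m \<le> j" "j \<le> k"
  shows "ahat ah k m = ahat ah k j * ahat ah j m"
  using \<open>j \<le> k\<close>
proof (induction k rule: dec_induct)
  case (step k)
  then show ?case using \<open>m \<le> j\<close> by (simp add: ahat_Suc)
qed simp

lemma bhat_Suc:
  assumes "1 \<le> k"
  shows "bhat ah bh (Suc k) = ah (Suc k) * bhat ah bh k + bh (Suc k)"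
proof -
  have "(\<Sum>j=2..k. ahat ah (Suc k) j * bh j) = (\<Sum>j=2..k. ah (Suc k) * (ahat ah k j * bh j))"
    by (rule sum.cong) (auto simp: ahat_Suc)
  then show ?thesis
    using assms unfolding bhat_def by (simp add: sum_distrib_left)
qed

lemma chain_unfold:
  fixes ah bh L R :: "nat \<Rightarrow> real"
  assumes "2 \<le> k" "k \<le> n"
    and L: "\<And>i. 2 \<le> i \<Longrightarrow> i \<le> n \<Longrightarrow> L i = ah i * R (i - 1) + bh i"
  shows "L k = ahat ah k 1 * R 1 + bhat ah bh k + (\<Sum>j=2..k-1. ahat ah k j * (R j - L j))"
  using assms(1,2)
proof (induction k rule: nat_induct_at_least)
  case base
  then show ?case
    using L[of 2] by (simp add: ahat_def bhat_def numeral_2_eq_2)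
next
  case (Suc k)
  let ?D = "\<lambda>k. \<Sum>j=2..k-1. ahat ah k j * (R j - L j)"
  have IH: "L k = ahat ah k 1 * R 1 + bhat ah bh k + ?D k"
    using Suc by simp
  have step: "L (Suc k) = ah (Suc k) * (L k + (R k - L k)) + bh (Suc k)"
    using L[of "Suc k"] Suc by simp
  have "{2..Suc k - 1} = insert k {2..k-1}"
    using Suc by auto
  then have "?D (Suc k) = ahat ah (Suc k) k * (R k - L k)
      + (\<Sum>j=2..k-1. ahat ah (Suc k) j * (R j - L j))"
    using Suc by simp
  also have "(\<Sum>j=2..k-1. ahat ah (Suc k) j * (R j - L j)) = ah (Suc k) * ?D k"
    unfolding sum_distrib_left by (rule sum.cong) (auto simp: ahat_Suc)
  finally show ?case
    using IH step Suc by (simp add: ahat_Suc bhat_Suc algebra_simps)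
qed

lemma is_istar_range: "is_istar ah n i \<Longrightarrow> 2 \<le> n \<Longrightarrow> 1 \<le> i \<and> i \<le> n"
  unfolding is_istar_def by (auto split: if_splits)

lemma ahat_le_ahat_istar:
  assumes pos: "\<And>i. 2 \<le> i \<Longrightarrow> i \<le> n \<Longrightarrow> ah i > 0"
    and istar: "is_istar ah n istar"
    and j: "2 \<le> j" "j \<le> n"
  shows "ahat ah n j \<le> ahat ah n istar"
proof -
  let ?m = "Min ((\<lambda>k. ahat ah k 1) ` {2..n})"
  have ahat_gt0: "\<And>k m. 1 \<le> m \<Longrightarrow> k \<le> n \<Longrightarrow> ahat ah k m > 0"
    by (rule ahat_pos) (use pos in auto)
  have split_j: "ahat ah n 1 = ahat ah n j * ahat ah j 1"
    using j by (intro ahat_trans) auto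
  have min_le: "?m \<le> ahat ah j 1"
    using j by (intro Min_le) auto
  have nj_pos: "ahat ah n j > 0"
    using ahat_gt0 j by auto
  show ?thesis
  proof (cases "?m \<le> 1")
    case True
    then have istar_min: "ahat ah istar 1 = ?m" and "2 \<le> istar" "istar \<le> n"
      using istar unfolding is_istar_def by auto
    then have split_istar: "ahat ah n 1 = ahat ah n istar * ahat ah istar 1"
      and istar_pos: "ahat ah istar 1 > 0"
      using ahat_trans[of 1 istar n ah] ahat_gt0 by auto
    have "ahat ah n j * ahat ah istar 1 \<le> ahat ah n j * ahat ah j 1"
      using min_le istar_min nj_pos by (intro mult_left_mono) auto
    then show ?thesis
      using split_j split_istar istar_pos by simp
  next
    case False
    then have "istar = 1"
      using istar unfolding is_istar_def by auto
    moreover have "ahat ah n j * 1 \<le> ahat ah n j * ahat ah j 1"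
      using False min_le nj_pos by (intro mult_left_mono) auto
    ultimately show ?thesis
      using split_j by simp
  qed
qed

lemma good_clocks_receive_bound:
  fixes a1 b1 an bn t1 tn :: real
  assumes "a1 > 0" "an > 0" "t1 \<le> tn"
  shows "an * tn + bn \<ge> an / a1 * (a1 * t1 + b1) + (bn - an / a1 * b1)"
proof -
  have "an * t1 \<le> an * tn"
    using assms(2,3) by simp
  then show ?thesis
    using assms(1) by (simp add: field_simps)
qed

lemma sum_ge_div_max_weight:
  fixes x w :: "'a \<Rightarrow> real"
  assumes "M > 0" "\<And>j. j \<in> A \<Longrightarrow> w j \<le> M" "\<And>j. j \<in> A \<Longrightarrow> x j \<ge> 0"
    and "X \<le> (\<Sum>j\<in>A. w j * x j)"
  shows "X / M \<le> (\<Sum>j\<in>A. x j)"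
proof -
  have "(\<Sum>j\<in>A. w j * x j) \<le> (\<Sum>j\<in>A. M * x j)"
    by (rule sum_mono) (use assms(2,3) in \<open>auto intro: mult_right_mono\<close>)
  then have "X \<le> M * (\<Sum>j\<in>A. x j)"
    using assms(4) by (simp add: sum_distrib_left)
  then show ?thesis
    using assms(1) by (simp add: divide_le_eq mult.commute)
qed

theorem lemma5:
  fixes n :: nat and ah bh L R :: "nat \<Rightarrow> real"
    and a1 b1 an bn t1 tn :: real and istar :: nat
  assumes "n \<ge> 2"
    and "\<And>i. 2 \<le> i \<Longrightarrow> i \<le> n \<Longrightarrow> ah i > 0"
    and "is_istar ah n istar"
    and "a1 > 0" and "an > 0"
    and "t1 \<le> tn"
    and "R 1 = a1 * t1 + b1"
    and "L n = an * tn + bn"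
    and "\<And>i. 2 \<le> i \<Longrightarrow> i \<le> n \<Longrightarrow> L i = ah i * R (i - 1) + bh i"
    and "\<And>i. 2 \<le> i \<Longrightarrow> i \<le> n - 1 \<Longrightarrow> L i \<le> R i"
  shows "(\<Sum>j=2..n-1. R j - L j) \<ge>
           (an / a1 - ahat ah n 1) / ahat ah n istar * R 1
           + (bn - (an / a1) * b1 - bhat ah bh n) / ahat ah n istar"
proof -
  let ?X = "(an / a1 - ahat ah n 1) * R 1 + (bn - (an / a1) * b1 - bhat ah bh n)"
  have "L n = ahat ah n 1 * R 1 + bhat ah bh n + (\<Sum>j=2..n-1. ahat ah n j * (R j - L j))"
    using chain_unfold[of n n L ah R bh] assms(1,9) by blast
  moreover have "L n \<ge> an / a1 * R 1 + (bn - an / a1 * b1)"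
    using good_clocks_receive_bound[OF assms(4-6)] assms(7,8) by simp
  ultimately have "?X \<le> (\<Sum>j=2..n-1. ahat ah n j * (R j - L j))"
    by (simp add: algebra_simps)
  moreover have "ahat ah n istar > 0"
    using is_istar_range[OF assms(3,1)] assms(2) by (intro ahat_pos) auto
  ultimately have "?X / ahat ah n istar \<le> (\<Sum>j=2..n-1. R j - L j)"
    using ahat_le_ahat_istar[OF assms(2,3)] assms(10)
    by (intro sum_ge_div_max_weight) auto
  then show ?thesis
    by (simp add: add_divide_distrib)
qed

end
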